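(* Let $(X,\|\cdot\|_X)$ and $(Y,\|\cdot\|_Y)$ be two-dimensional real normed spaces and $\tau:S_X\to S_Y$ a surjective isometry. Then $S_X$ is piecewise $C^1$-differentiable if and only if $S_Y$ is. Moreover, if $S_X$ is piecewise $C^1$-differentiable, then for every $x\in S_X$, $\|\cdot\|_X$ is differentiable at $x$ if and only if $\|\cdot\|_Y$ is differentiable at $\tau(x)$.
   Context: $S_X$ denotes the unit sphere. $S_X$ is called piecewise $C^1$-differentiable if the norm $\|\cdot\|_X$ fails to be differentiable at only finitely many points of $S_X$ (for a norm in finite dimension, differentiability at a point is equivalent to $C^1$-differentiability near it). *)

theory Defs
  imports "HOL-Analysis.Analysis"
begin

text \<open>The unit sphere S_X of a real normed space is sphere 0 1.
  S_X is piecewise C^1-differentiable iff the norm fails to be (Frechet)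
  differentiable at only finitely many points of S_X.\<close>

definition piecewise_C1_sphere :: "'a::real_normed_vector itself \<Rightarrow> bool" where
  "piecewise_C1_sphere _ \<longleftrightarrow>
     finite {x \<in> sphere (0::'a) 1. \<not> ((norm :: 'a \<Rightarrow> real) differentiable (at x))}"

end

theory Submission
  imports Defs
begin

text \<open>Smoothness of the unit sphere at x can be read off the metric of the sphere alone: the norm
  is differentiable at x iff there is a diametral point w (with distance 2 from x) such that
  points y near x and z near w stay at distance 2 up to an error o(dist y x + dist z w).
  For a differentiable point take w = -x and expand the norm to first order at the midpoint of
  y and -z. Conversely, a norming functional f of (x - w)/2 satisfies f x = 1 and f w = -1, and
  the diametral condition forces norm q - f q = o(norm (q - x)), so f is the derivative.
  A surjective isometry of the spheres preserves this metric condition and is injective, so it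
  maps the non-smooth points of one sphere bijectively onto those of the other.\<close>

lemma linear_surj_from_real_pair:
  assumes "dim (UNIV :: 'a::real_vector set) = 2"
  obtains L :: "real \<times> real \<Rightarrow> 'a::real_vector" where "linear L" "surj L"
proof -
  obtain B :: "'a set" where B: "independent B" "UNIV \<subseteq> span B" "card B = 2"
    using basis_exists[of "UNIV :: 'a set"] assms by auto
  then obtain b1 b2 where b: "B = {b1, b2}" "b1 \<noteq> b2"
    by (auto simp: card_2_iff)
  define L where "L p = fst p *\<^sub>R b1 + snd p *\<^sub>R b2" for p :: "real \<times> real"
  have "linear L"
    by (rule linearI) (auto simp: L_def algebra_simps)
  moreover have "surj L"
  proof -
    have "UNIV = range (\<lambda>u. \<Sum>v\<in>{b1, b2}. u v *\<^sub>R v)"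
      using B(2) span_finite[of B] b by auto
    also have "\<dots> \<subseteq> range L"
      using b(2) by (auto simp: L_def intro!: image_eqI[where x = "(_, _)"])
    finally show ?thesis by blast
  qed
  ultimately show ?thesis using that by blast
qed

lemma abs_le_norm_of_le_one_on_ball:
  fixes f :: "'a::real_normed_vector \<Rightarrow> real"
  assumes "linear f" and ball: "\<And>v. norm v < 1 \<Longrightarrow> f v \<le> 1"
  shows "\<bar>f v\<bar> \<le> norm v"
proof -
  interpret f: linear f by fact
  have le: "f u \<le> norm u" for u
  proof (rule dense_ge)
    fix r assume r: "norm u < r"
    then have "r > 0" using norm_ge_zero[of u] by linarith
    have "f ((1 / r) *\<^sub>R u) \<le> 1"
      using r \<open>r > 0\<close> by (intro ball) simp
    then show "f u \<le> r" using \<open>r > 0\<close> by (simp add: f.scaleR field_simps)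
  qed
  show ?thesis using le[of v] le[of "- v"] by (simp add: f.neg)
qed

lemma exists_norming_functional:
  fixes L :: "'e::euclidean_space \<Rightarrow> 'a::real_normed_vector" and m :: 'a
  assumes "linear L" "surj L" and m: "norm m = 1"
  obtains f where "bounded_linear f" "f m = 1" "\<And>v. \<bar>f v\<bar> \<le> norm v"
proof -
  txt \<open>Separation theorems are only available in euclidean spaces, so the open unit ball and m
    are pulled back along L and separated there.\<close>
  obtain R where R: "linear R" "\<And>v. L (R v) = v"
    using linear_surjective_right_inverse[OF assms(1,2)] by (auto simp: fun_eq_iff)
  have "convex (L -` ball 0 1)" "convex (L -` {m})"
    by (simp_all add: convex_linear_vimage[OF \<open>linear L\<close>])
  moreover have "R 0 \<in> L -` ball 0 1" "R m \<in> L -` {m}"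
    by (simp_all add: R(2))
  moreover have "L -` ball 0 1 \<inter> L -` {m} = {}"
    using m by auto
  ultimately obtain a b where a: "a \<noteq> 0"
    and below: "\<And>p. norm (L p) < 1 \<Longrightarrow> a \<bullet> p \<le> b" and above: "\<And>p. L p = m \<Longrightarrow> b \<le> a \<bullet> p"
    using separating_hyperplane_sets[of "L -` ball 0 1" "L -` {m}"] by fastforce
  have "b > 0"
  proof -
    define t where "t = 1 / (2 * norm (L a) + 1)"
    have "t > 0" by (simp add: t_def add_nonneg_pos)
    have "norm (L (t *\<^sub>R a)) < 1"
      using \<open>t > 0\<close> by (simp add: linear_scale[OF \<open>linear L\<close>] t_def field_simps)
    then have "t * (a \<bullet> a) \<le> b" using below by fastforce
    moreover have "t * (a \<bullet> a) > 0" using \<open>t > 0\<close> a by simp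
    ultimately show ?thesis by linarith
  qed
  define f where "f v = (a \<bullet> R v) / b" for v
  have "linear f"
    unfolding f_def by (intro linear_compose[OF R(1), unfolded o_def] linearI)
      (auto simp: inner_add_right add_divide_distrib)
  have bound: "\<bar>f v\<bar> \<le> norm v" for v
    using \<open>linear f\<close> by (rule abs_le_norm_of_le_one_on_ball)
      (use below R(2) \<open>b > 0\<close> in \<open>auto simp: f_def\<close>)
  have "1 \<le> f m" using above[of "R m"] R(2) \<open>b > 0\<close> by (simp add: f_def)
  then have "f m = 1" using bound[of m] m by simp
  moreover have "bounded_linear f"
    using \<open>linear f\<close> bound by (intro bounded_linear_intro[where K = 1]) (auto simp: linear_add linear_scale)
  ultimately show ?thesis using that bound by blast
qed

definition diametrally_smooth :: "'a::metric_space set \<Rightarrow> 'a \<Rightarrow> bool" where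
  "diametrally_smooth S x \<longleftrightarrow> (\<exists>w\<in>S. dist x w = 2 \<and>
     (\<forall>e>0. \<exists>d>0. \<forall>y\<in>S. \<forall>z\<in>S. dist y x < d \<longrightarrow> dist z w < d \<longrightarrow>
        2 - dist y z \<le> e * (dist y x + dist z w)))"

lemma diametrally_smooth_isometric_image:
  fixes \<tau> :: "'a::metric_space \<Rightarrow> 'b::metric_space"
  assumes isom: "\<forall>x\<in>S. \<forall>y\<in>S. dist (\<tau> x) (\<tau> y) = dist x y"
    and onto: "\<tau> ` S = T" and "x \<in> S" and "diametrally_smooth S x"
  shows "diametrally_smooth T (\<tau> x)"
proof -
  obtain w where "w \<in> S" "dist x w = 2" and near: "\<And>e. e > 0 \<Longrightarrow> \<exists>d>0. \<forall>y\<in>S. \<forall>z\<in>S.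
      dist y x < d \<longrightarrow> dist z w < d \<longrightarrow> 2 - dist y z \<le> e * (dist y x + dist z w)"
    using assms(4) unfolding diametrally_smooth_def by blast
  show ?thesis
    unfolding diametrally_smooth_def
  proof (intro bexI conjI allI impI)
    show "\<tau> w \<in> T" "dist (\<tau> x) (\<tau> w) = 2"
      using \<open>w \<in> S\<close> \<open>dist x w = 2\<close> \<open>x \<in> S\<close> isom onto by auto
    fix e :: real assume "e > 0"
    then show "\<exists>d>0. \<forall>y\<in>T. \<forall>z\<in>T. dist y (\<tau> x) < d \<longrightarrow> dist z (\<tau> w) < d \<longrightarrow>
        2 - dist y z \<le> e * (dist y (\<tau> x) + dist z (\<tau> w))"
      unfolding onto[symmetric] ball_simps using near isom \<open>x \<in> S\<close> \<open>w \<in> S\<close> by simp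
  qed
qed

lemma inj_on_if_isometric:
  fixes \<tau> :: "'a::metric_space \<Rightarrow> 'b::metric_space"
  assumes "\<forall>x\<in>S. \<forall>y\<in>S. dist (\<tau> x) (\<tau> y) = dist x y"
  shows "inj_on \<tau> S"
  by (rule inj_onI) (use assms in force)

lemma bij_betw_finite_Collect_iff:
  assumes "bij_betw \<tau> S T" and "\<And>x. x \<in> S \<Longrightarrow> P x \<longleftrightarrow> Q (\<tau> x)"
  shows "finite {y \<in> T. Q y} \<longleftrightarrow> finite {x \<in> S. P x}"
proof -
  have "{y \<in> T. Q y} = \<tau> ` {x \<in> S. P x}"
    using assms by (auto simp: bij_betw_def)
  moreover have "inj_on \<tau> {x \<in> S. P x}"
    using assms(1) by (auto simp: bij_betw_def intro: inj_on_subset)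
  ultimately show ?thesis
    by (simp add: finite_image_iff)
qed

lemma diametrally_smooth_isometry_iff:
  fixes \<tau> :: "'a::metric_space \<Rightarrow> 'b::metric_space"
  assumes isom: "\<forall>x\<in>S. \<forall>y\<in>S. dist (\<tau> x) (\<tau> y) = dist x y"
    and onto: "\<tau> ` S = T" and "x \<in> S"
  shows "diametrally_smooth T (\<tau> x) \<longleftrightarrow> diametrally_smooth S x"
proof
  show "diametrally_smooth S x \<Longrightarrow> diametrally_smooth T (\<tau> x)"
    by (rule diametrally_smooth_isometric_image[OF isom onto \<open>x \<in> S\<close>])
next
  have "inj_on \<tau> S"
    using isom by (rule inj_on_if_isometric)
  define \<sigma> where "\<sigma> = inv_into S \<tau>"
  have \<sigma>\<tau>: "\<sigma> (\<tau> y) = y" if "y \<in> S" for y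
    using \<open>inj_on \<tau> S\<close> that by (simp add: \<sigma>_def)
  have "\<forall>y\<in>T. \<forall>z\<in>T. dist (\<sigma> y) (\<sigma> z) = dist y z"
    unfolding onto[symmetric] using isom \<sigma>\<tau> by simp
  moreover have "\<sigma> ` T = S"
    unfolding onto[symmetric] image_comp using \<sigma>\<tau> by simp
  moreover have "\<tau> x \<in> T"
    using \<open>x \<in> S\<close> onto by blast
  ultimately show "diametrally_smooth T (\<tau> x) \<Longrightarrow> diametrally_smooth S x"
    using diametrally_smooth_isometric_image[of T \<sigma> S "\<tau> x"] \<sigma>\<tau>[OF \<open>x \<in> S\<close>] by simp
qed

lemma norm_normalize_sub_le:
  fixes x k :: "'a::real_normed_vector"
  assumes "norm x = 1" "norm k \<le> 1/2"
  shows "norm ((1 / norm (x + k)) *\<^sub>R (x + k) - x) \<le> 4 * norm k"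
proof -
  define N where "N = norm (x + k)"
  have N: "\<bar>N - 1\<bar> \<le> norm k"
    using norm_triangle_ineq[of x k] norm_triangle_ineq4[of "x + k" k] assms(1) by (simp add: N_def)
  then have "N \<ge> 1/2" using assms(2) by linarith
  have "(1 / N) *\<^sub>R (x + k) - x = (1 / N) *\<^sub>R (k + (1 - N) *\<^sub>R x)"
    using \<open>N \<ge> 1/2\<close> by (simp add: algebra_simps)
  also have "norm \<dots> \<le> (1 / N) * (norm k + \<bar>1 - N\<bar>)"
    using norm_triangle_ineq[of k "(1 - N) *\<^sub>R x"] assms(1) \<open>N \<ge> 1/2\<close>
    by (simp add: divide_right_mono)
  also have "\<dots> \<le> 2 * (2 * norm k)"
    using N \<open>N \<ge> 1/2\<close> by (intro mult_mono) (auto simp: field_simps)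
  finally show ?thesis by (simp add: N_def)
qed

lemma diameter_defect_le_of_norm_approx:
  fixes x y z :: "'a::real_normed_vector"
  assumes "linear D" and x: "norm x = 1" and y: "norm y = 1" and z: "norm z = 1"
    and approx: "\<And>q. norm (q - x) < d \<Longrightarrow> \<bar>norm q - 1 - D (q - x)\<bar> \<le> c * norm (q - x)"
    and "c \<ge> 0" "dist y x < d" "dist z (- x) < d"
  shows "2 - dist y z \<le> 2 * c * (dist y x + dist z (- x))"
proof -
  interpret D: linear D by fact
  define u v where "u = y - x" and "v = z + x"
  have "norm u < d" "norm v < d"
    using \<open>dist y x < d\<close> \<open>dist z (- x) < d\<close> by (simp_all add: u_def v_def dist_norm)
  have Du: "\<bar>D u\<bar> \<le> c * norm u"
    using approx[of y] \<open>norm u < d\<close> y by (simp add: u_def)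
  have "- z - x = - v"
    by (simp add: v_def)
  then have Dv: "\<bar>D v\<bar> \<le> c * norm v"
    using approx[of "- z"] \<open>norm v < d\<close> z by (simp add: D.neg)
  txt \<open>Apply the approximation at the midpoint q = (y - z) / 2.\<close>
  define q where "q = x + (1/2) *\<^sub>R (u - v)"
  have uv: "norm (u - v) \<le> norm u + norm v"
    by (rule norm_triangle_ineq4)
  have "norm (q - x) < d"
    using \<open>norm u < d\<close> \<open>norm v < d\<close> uv by (simp add: q_def)
  have "1 + D (q - x) - c * norm (q - x) \<le> norm q"
    using approx[OF \<open>norm (q - x) < d\<close>] by (simp only: abs_le_iff) linarith
  moreover have "D (q - x) = (D u - D v) / 2" "norm (q - x) = norm (u - v) / 2"
    by (simp_all add: q_def D.scaleR D.diff)
  moreover have "y - z = 2 *\<^sub>R q"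
    by (simp add: q_def u_def v_def algebra_simps scaleR_2)
  then have "dist y z = 2 * norm q"
    by (simp add: dist_norm)
  ultimately have "2 - dist y z \<le> D v - D u + c * norm (u - v)"
    by (simp add: field_simps)
  also have "\<dots> \<le> 2 * c * (norm u + norm v)"
    using Du Dv mult_left_mono[OF uv \<open>c \<ge> 0\<close>] by (simp add: abs_le_iff field_simps)
  finally show ?thesis
    by (simp add: dist_norm u_def v_def)
qed

lemma diametrally_smooth_sphere_if_differentiable:
  fixes x :: "'a::real_normed_vector"
  assumes x: "norm x = 1" and "norm differentiable (at x)"
  shows "diametrally_smooth (sphere 0 1) x"
proof -
  obtain D where "bounded_linear D" and approx: "\<And>e. e > 0 \<Longrightarrow> \<exists>d>0. \<forall>q. norm (q - x) < d \<longrightarrow>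
      norm (norm q - norm x - D (q - x)) \<le> e * norm (q - x)"
    using assms(2) by (auto simp: differentiable_def has_derivative_at_alt)
  show ?thesis
    unfolding diametrally_smooth_def
  proof (intro bexI[of _ "- x"] conjI allI impI)
    show "- x \<in> sphere 0 1" "dist x (- x) = 2"
      using x by (simp_all add: dist_norm flip: scaleR_2)
    fix e :: real assume "e > 0"
    then obtain d where "d > 0" and d: "\<And>q. norm (q - x) < d \<Longrightarrow>
        \<bar>norm q - 1 - D (q - x)\<bar> \<le> e / 2 * norm (q - x)"
      using approx[of "e / 2"] x by auto
    have "2 - dist y z \<le> e * (dist y x + dist z (- x))"
      if "y \<in> sphere 0 1" "z \<in> sphere 0 1" "dist y x < d" "dist z (- x) < d" for y z
      using diameter_defect_le_of_norm_approx[OF bounded_linear.linear[OF \<open>bounded_linear D\<close>] x _ _ d]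
        that \<open>e > 0\<close> by simp
    with \<open>d > 0\<close> show "\<exists>d>0. \<forall>y\<in>sphere 0 1. \<forall>z\<in>sphere 0 1. dist y x < d \<longrightarrow> dist z (- x) < d \<longrightarrow>
        2 - dist y z \<le> e * (dist y x + dist z (- x))"
      by blast
  qed
qed

lemma dist_normalize_diametral_le:
  fixes x w y :: "'a::real_normed_vector"
  assumes "norm x = 1" "norm w = 1" "norm y = 1" and n: "norm (w + (y - x)) \<ge> 1"
  shows "dist y ((1 / norm (w + (y - x))) *\<^sub>R (w + (y - x))) \<le> 1 + 1 / norm (w + (y - x))"
proof -
  define n where "n = norm (w + (y - x))"
  have "n \<ge> 1"
    using n by (simp add: n_def)
  have "y - (1 / n) *\<^sub>R (w + (y - x)) = (1 - 1 / n) *\<^sub>R y + (1 / n) *\<^sub>R (x - w)"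
    by (simp add: algebra_simps)
  then have "norm (y - (1 / n) *\<^sub>R (w + (y - x))) \<le> \<bar>1 - 1 / n\<bar> * norm y + \<bar>1 / n\<bar> * norm (x - w)"
    by (metis norm_scaleR norm_triangle_ineq)
  also have "norm (x - w) \<le> 2"
    using norm_triangle_ineq4[of x w] assms by simp
  then have "\<bar>1 - 1 / n\<bar> * norm y + \<bar>1 / n\<bar> * norm (x - w) \<le> 1 + 1 / n"
    using \<open>n \<ge> 1\<close> assms(3) by (simp add: field_simps)
  finally show ?thesis
    by (simp add: dist_norm n_def)
qed

lemma norm_add_diametral_le_of_defect:
  fixes x w y :: "'a::real_normed_vector"
  assumes x: "norm x = 1" and w: "norm w = 1" and y: "norm y = 1" and "norm (y - x) \<le> 1/2"
    and defect: "\<And>z. norm z = 1 \<Longrightarrow> dist z w \<le> 4 * norm (y - x) \<Longrightarrow>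
      2 - dist y z \<le> c * (norm (y - x) + dist z w)"
    and "c \<ge> 0"
  shows "norm (w + (y - x)) - 1 \<le> 15/2 * c * norm (y - x)"
proof -
  define \<delta> n where "\<delta> = norm (y - x)" and "n = norm (w + (y - x))"
  have "\<bar>n - 1\<bar> \<le> \<delta>"
    using norm_triangle_ineq[of w "y - x"] norm_triangle_ineq4[of "w + (y - x)" "y - x"] w
    by (simp add: n_def \<delta>_def)
  show ?thesis
  proof (cases "n \<le> 1")
    case True
    then show ?thesis
      using mult_nonneg_nonneg[OF \<open>c \<ge> 0\<close> norm_ge_zero[of "y - x"]] by (simp add: n_def)
  next
    case False
    txt \<open>Normalising w + (y - x) gives a point z near w, and the diameter defect of the
      pair y, z bounds n.\<close>
    define z where "z = (1 / n) *\<^sub>R (w + (y - x))"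
    have "norm z = \<bar>1 / n\<bar> * n"
      by (simp add: z_def n_def)
    then have "norm z = 1"
      using False by simp
    have "dist z w \<le> 4 * \<delta>"
      using norm_normalize_sub_le[OF w, of "y - x"] assms(4) by (simp add: z_def n_def \<delta>_def dist_norm)
    then have "2 - dist y z \<le> c * (\<delta> + 4 * \<delta>)"
      using defect[OF \<open>norm z = 1\<close>] mult_left_mono[OF _ \<open>c \<ge> 0\<close>, of "\<delta> + dist z w" "\<delta> + 4 * \<delta>"]
      by (simp add: \<delta>_def)
    moreover have "dist y z \<le> 1 + 1 / n"
      using dist_normalize_diametral_le[OF x w y] False by (simp add: z_def n_def)
    ultimately have "n * (1 - 1 / n) \<le> n * (5 * c * \<delta>)"
      using False by (intro mult_left_mono) auto
    then have "n - 1 \<le> n * (5 * c * \<delta>)"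
      using False by (simp add: right_diff_distrib)
    also have "\<dots> \<le> (3/2) * (5 * c * \<delta>)"
      using \<open>\<bar>n - 1\<bar> \<le> \<delta>\<close> assms(4) \<open>c \<ge> 0\<close> by (intro mult_right_mono) (auto simp: \<delta>_def)
    finally show ?thesis
      by (simp add: n_def \<delta>_def)
  qed
qed

lemma norm_add_diametral_le:
  fixes x w :: "'a::real_normed_vector"
  assumes x: "norm x = 1" and w: "norm w = 1"
    and near: "\<And>e. e > 0 \<Longrightarrow> \<exists>d>0. \<forall>y\<in>sphere 0 1. \<forall>z\<in>sphere 0 1.
      dist y x < d \<longrightarrow> dist z w < d \<longrightarrow> 2 - dist y z \<le> e * (dist y x + dist z w)"
    and "e > 0"
  shows "\<exists>d>0. \<forall>y\<in>sphere 0 1. norm (y - x) < d \<longrightarrow> norm (w + (y - x)) - 1 \<le> e * norm (y - x)"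
proof -
  obtain d0 where "d0 > 0" and d0: "\<forall>y\<in>sphere 0 1. \<forall>z\<in>sphere 0 1.
      dist y x < d0 \<longrightarrow> dist z w < d0 \<longrightarrow> 2 - dist y z \<le> e / 10 * (dist y x + dist z w)"
    using near[of "e / 10"] \<open>e > 0\<close> by auto
  show ?thesis
  proof (intro exI[of _ "min (1/2) (d0/5)"] conjI ballI impI)
    show "min (1/2) (d0/5) > 0" using \<open>d0 > 0\<close> by simp
    fix y :: 'a assume y: "y \<in> sphere 0 1" and \<delta>: "norm (y - x) < min (1/2) (d0/5)"
    have "2 - dist y z \<le> e / 10 * (norm (y - x) + dist z w)"
      if "norm z = 1" "dist z w \<le> 4 * norm (y - x)" for z
    proof -
      have "dist y x < d0" "dist z w < d0"
        using that(2) \<delta> norm_ge_zero[of "y - x"] unfolding dist_norm min_less_iff_conj by linarith+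
      then show ?thesis
        using d0 y that(1) by (simp add: dist_norm)
    qed
    then have "norm (w + (y - x)) - 1 \<le> 15/2 * (e / 10) * norm (y - x)"
      using y \<delta> \<open>e > 0\<close> by (intro norm_add_diametral_le_of_defect[OF x w]) auto
    also have "\<dots> \<le> e * norm (y - x)"
      using \<open>e > 0\<close> by (simp add: mult_right_mono)
    finally show "norm (w + (y - x)) - 1 \<le> e * norm (y - x)" .
  qed
qed

lemma norm_remainder_le_of_sphere_estimate:
  fixes f :: "'a::real_normed_vector \<Rightarrow> real"
  assumes "linear f" and f_le: "\<And>v. \<bar>f v\<bar> \<le> norm v" and x: "norm x = 1" and "f x = 1"
    and "norm (q - x) \<le> 1/2"
    and est: "\<And>y. norm y = 1 \<Longrightarrow> norm (y - x) \<le> 4 * norm (q - x) \<Longrightarrow> 1 - f y \<le> c * norm (y - x)"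
    and "c \<ge> 0"
  shows "\<bar>norm q - norm x - f (q - x)\<bar> \<le> 6 * c * norm (q - x)"
proof -
  interpret f: linear f by fact
  define k N where "k = q - x" and "N = norm q"
  have q: "q = x + k" and k: "norm k \<le> 1/2"
    using \<open>norm (q - x) \<le> 1/2\<close> by (simp_all add: k_def)
  have N: "\<bar>N - 1\<bar> \<le> norm k"
    using norm_triangle_ineq[of x k] norm_triangle_ineq4[of "x + k" k] x by (simp add: N_def q)
  then have "N > 0" using k by linarith
  define y where "y = (1 / N) *\<^sub>R q"
  have "norm y = 1"
    using \<open>N > 0\<close> by (simp add: y_def N_def)
  moreover have yx: "norm (y - x) \<le> 4 * norm k"
    using norm_normalize_sub_le[OF x k] by (simp add: y_def N_def q)
  ultimately have "1 - f y \<le> c * (4 * norm k)"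
    using est[of y] mult_left_mono[OF yx \<open>c \<ge> 0\<close>] by (simp add: k_def)
  moreover have "N - f q = N * (1 - f y)"
    using \<open>N > 0\<close> by (simp add: y_def f.scaleR right_diff_distrib)
  ultimately have "N - f q \<le> N * (c * (4 * norm k))"
    using \<open>N > 0\<close> by (simp add: mult_left_mono)
  also have "\<dots> \<le> (3/2) * (c * (4 * norm k))"
    using N k \<open>c \<ge> 0\<close> by (intro mult_right_mono) auto
  finally have "N - f q \<le> 6 * c * norm k" by simp
  moreover have "0 \<le> N - f q"
    using f_le[of q] by (simp add: N_def abs_le_iff)
  moreover have "norm q - norm x - f (q - x) = N - f q"
    using x \<open>f x = 1\<close> by (simp add: N_def f.diff)
  ultimately show ?thesis
    by (simp add: k_def)
qed

lemma has_derivative_norm_if_sphere_estimate: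
  fixes f :: "'a::real_normed_vector \<Rightarrow> real"
  assumes "bounded_linear f" and f_le: "\<And>v. \<bar>f v\<bar> \<le> norm v" and x: "norm x = 1" and "f x = 1"
    and est: "\<And>e. e > 0 \<Longrightarrow> \<exists>d>0. \<forall>y\<in>sphere 0 1. norm (y - x) < d \<longrightarrow> 1 - f y \<le> e * norm (y - x)"
  shows "(norm has_derivative f) (at x)"
  unfolding has_derivative_at_alt
proof (intro conjI allI impI)
  show "bounded_linear f" by fact
  fix e :: real assume "e > 0"
  then obtain d where "d > 0" and d: "\<forall>y\<in>sphere 0 1. norm (y - x) < d \<longrightarrow> 1 - f y \<le> e / 6 * norm (y - x)"
    using est[of "e / 6"] by auto
  show "\<exists>d>0. \<forall>q. norm (q - x) < d \<longrightarrow> norm (norm q - norm x - f (q - x)) \<le> e * norm (q - x)"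
  proof (intro exI[of _ "min (1/2) (d/4)"] conjI allI impI)
    show "min (1/2) (d/4) > 0" using \<open>d > 0\<close> by simp
    fix q :: 'a assume q: "norm (q - x) < min (1/2) (d/4)"
    have "1 - f y \<le> e / 6 * norm (y - x)" if "norm y = 1" "norm (y - x) \<le> 4 * norm (q - x)" for y
      using d that q by simp
    then show "norm (norm q - norm x - f (q - x)) \<le> e * norm (q - x)"
      using norm_remainder_le_of_sphere_estimate[OF bounded_linear.linear[OF \<open>bounded_linear f\<close>] f_le x
          \<open>f x = 1\<close>, of q "e / 6"] q \<open>e > 0\<close>
      by simp
  qed
qed

lemma differentiable_norm_if_diametrally_smooth:
  fixes L :: "'e::euclidean_space \<Rightarrow> 'a::real_normed_vector" and x :: 'a
  assumes "linear L" "surj L" and x: "norm x = 1" and "diametrally_smooth (sphere 0 1) x"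
  shows "norm differentiable (at x)"
proof -
  obtain w where w: "norm w = 1" and "dist x w = 2" and near: "\<And>e. e > 0 \<Longrightarrow> \<exists>d>0. \<forall>y\<in>sphere 0 1. \<forall>z\<in>sphere 0 1.
      dist y x < d \<longrightarrow> dist z w < d \<longrightarrow> 2 - dist y z \<le> e * (dist y x + dist z w)"
    using assms(4) unfolding diametrally_smooth_def by auto
  define m where "m = (1/2) *\<^sub>R (x - w)"
  have "norm m = 1"
    using \<open>dist x w = 2\<close> by (simp add: m_def dist_norm)
  obtain f where f: "bounded_linear f" "f m = 1" and f_le: "\<And>v. \<bar>f v\<bar> \<le> norm v"
    using exists_norming_functional[OF assms(1,2) \<open>norm m = 1\<close>] by blast
  interpret f: bounded_linear f by (rule f(1))
  have "f x - f w = 2"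
    using \<open>f m = 1\<close> by (simp add: m_def f.scaleR f.diff)
  then have "f x = 1" "f w = -1"
    using f_le[of x] f_le[of w] x w by (auto simp: abs_le_iff)
  have "\<exists>d>0. \<forall>y\<in>sphere 0 1. norm (y - x) < d \<longrightarrow> 1 - f y \<le> e * norm (y - x)" if "e > 0" for e
  proof -
    have "1 - f y \<le> norm (w + (y - x)) - 1" for y
      using f_le[of "w + (y - x)"] \<open>f x = 1\<close> \<open>f w = -1\<close> by (simp add: f.add f.diff abs_le_iff)
    then show ?thesis
      using norm_add_diametral_le[OF x w near \<open>e > 0\<close>] by (meson order_trans)
  qed
  then have "(norm has_derivative f) (at x)"
    by (rule has_derivative_norm_if_sphere_estimate[OF f(1) f_le x \<open>f x = 1\<close>])
  then show ?thesis
    by (auto simp: differentiable_def)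
qed

lemma differentiable_norm_iff_diametrally_smooth:
  fixes L :: "'e::euclidean_space \<Rightarrow> 'a::real_normed_vector" and x :: 'a
  assumes "linear L" "surj L" and "norm x = 1"
  shows "norm differentiable (at x) \<longleftrightarrow> diametrally_smooth (sphere 0 1) x"
  using differentiable_norm_if_diametrally_smooth[OF assms] diametrally_smooth_sphere_if_differentiable[OF assms(3)]
  by blast

theorem corollary2:
  fixes \<tau> :: "'a::real_normed_vector \<Rightarrow> 'b::real_normed_vector"
  assumes dimX: "dim (UNIV :: 'a set) = 2"
    and dimY: "dim (UNIV :: 'b set) = 2"
    and isom: "\<forall>x\<in>sphere 0 1. \<forall>y\<in>sphere 0 1. dist (\<tau> x) (\<tau> y) = dist x y"
    and maps: "\<tau> ` sphere 0 1 = sphere 0 1"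
  shows "(piecewise_C1_sphere TYPE('a) \<longleftrightarrow> piecewise_C1_sphere TYPE('b))
       \<and> (piecewise_C1_sphere TYPE('a) \<longrightarrow>
           (\<forall>x\<in>sphere 0 1. ((norm :: 'a \<Rightarrow> real) differentiable (at x))
               \<longleftrightarrow> ((norm :: 'b \<Rightarrow> real) differentiable (at (\<tau> x)))))"
proof -
  obtain LX :: "real \<times> real \<Rightarrow> 'a" where LX: "linear LX" "surj LX"
    using linear_surj_from_real_pair[OF dimX] .
  obtain LY :: "real \<times> real \<Rightarrow> 'b" where LY: "linear LY" "surj LY"
    using linear_surj_from_real_pair[OF dimY] .
  have diff_iff: "(norm :: 'a \<Rightarrow> real) differentiable (at x) \<longleftrightarrow>
      (norm :: 'b \<Rightarrow> real) differentiable (at (\<tau> x))" if "x \<in> sphere 0 1" for x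
  proof -
    have "\<tau> x \<in> sphere 0 1"
      using that maps by blast
    then show ?thesis
      using that differentiable_norm_iff_diametrally_smooth[OF LX, of x]
        differentiable_norm_iff_diametrally_smooth[OF LY, of "\<tau> x"]
        diametrally_smooth_isometry_iff[OF isom maps that] by simp
  qed
  have "bij_betw \<tau> (sphere 0 1) (sphere 0 1)"
    using inj_on_if_isometric[OF isom] maps by (simp add: bij_betw_def)
  then have "piecewise_C1_sphere TYPE('a) \<longleftrightarrow> piecewise_C1_sphere TYPE('b)"
    unfolding piecewise_C1_sphere_def by (rule bij_betw_finite_Collect_iff[symmetric]) (simp add: diff_iff)
  with diff_iff show ?thesis
    by blast
qed

end
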